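(* Let $n\geq 8$, let $\mathfrak{X}=\{A_0,A_1,A_2\}$ be a non-symmetric class $2$ association scheme of order $n-1$, and let $B_1$ be the $(2n-1)\times(2n-1)$ matrix defined from $A_1$ as in the context, so that $\{I_{2n-1},B_1,B_1^T\}$ is a non-symmetric class $2$ association scheme. For $i\in\{1,\dots,2n-1\}$ let $N(i)=\{j : (B_1)_{ij}=1\}$, and for $1\le i<j<k\le 2n-1$ let $\nu(i,j,k)=|N(i)\cap N(j)\cap N(k)|$. Then $\nu(i,j,k)\leq (n-2)/2$ for all $1\le i<j<k\le 2n-1$, with equality if and only if $(i,j,k)=(a,n,n+a)$ for some $1\leq a\leq n-1$.
   Context: An association scheme of order $N$ is a set $\{A_0,\dots,A_d\}$ of $N\times N$ $0/1$-matrices such that $A_0=I_N$, $\sum_i A_i=J_N$ (all-ones matrix), each $A_i^T$ is in the set, and each product $A_iA_j$ is a linear combination of the $A_k$. It is non-symmetric of class $2$ if $d=2$ and $A_1^T=A_2\neq A_1$. (For such a scheme of order $n-1$ one has $n\equiv 0 \pmod 4$.) Definition of $B_1$ (indices $1\le i,j\le n-1$): $(B_1)_{i,j}=(A_1)_{ij}$, $(B_1)_{i,n}=0$, $(B_1)_{i,n+j}=(A_0+A_1)_{ij}$; $(B_1)_{n,j}=1$, $(B_1)_{n,n}=0$, $(B_1)_{n,n+j}=0$; $(B_1)_{n+i,j}=(A_1)_{ij}$, $(B_1)_{n+i,n}=1$, $(B_1)_{n+i,n+j}=(A_2)_{ij}$. In block form, $B_1=\begin{bmatrix} A_1 & \mathbf{0}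 & A_0+A_1\\ \mathbf{1}^T & 0 & \mathbf{0}^T\\ A_1 & \mathbf{1} & A_2\end{bmatrix}$ with blocks indexed by $\{1,\dots,n-1\},\{n\},\{n+1,\dots,2n-1\}$. *)

theory Defs
  imports Complex_Main
begin

text \<open>Square matrices of order N are represented as functions nat => nat => real,
  where only the entries with indices in {1..N} are meaningful.\<close>

type_synonym mat = "nat \<Rightarrow> nat \<Rightarrow> real"

definition mat_mult :: "nat \<Rightarrow> mat \<Rightarrow> mat \<Rightarrow> mat" where
  "mat_mult N X Y = (\<lambda>i j. \<Sum>k=1..N. X i k * Y k j)"

text \<open>An association scheme of order N and class d, given by the family A 0, ..., A d
  (a set of d+1 matrices, hence pairwise distinct on the index set).\<close>

definition assoc_scheme :: "nat \<Rightarrow> nat \<Rightarrow> (nat \<Rightarrow> mat) \<Rightarrow> bool" where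
  "assoc_scheme N d A \<longleftrightarrow>
     (\<forall>i\<le>d. \<forall>x\<in>{1..N}. \<forall>y\<in>{1..N}. A i x y = 0 \<or> A i x y = 1) \<and>
     (\<forall>i\<le>d. \<forall>j\<le>d. i \<noteq> j \<longrightarrow> (\<exists>x\<in>{1..N}. \<exists>y\<in>{1..N}. A i x y \<noteq> A j x y)) \<and>
     (\<forall>x\<in>{1..N}. \<forall>y\<in>{1..N}. A 0 x y = (if x = y then 1 else 0)) \<and>
     (\<forall>x\<in>{1..N}. \<forall>y\<in>{1..N}. (\<Sum>i\<le>d. A i x y) = 1) \<and>
     (\<forall>i\<le>d. \<exists>j\<le>d. \<forall>x\<in>{1..N}. \<forall>y\<in>{1..N}. A j x y = A i y x) \<and>
     (\<forall>i\<le>d. \<forall>j\<le>d. \<exists>c :: nat \<Rightarrow> real. \<forall>x\<in>{1..N}. \<forall>y\<in>{1..N}.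
         mat_mult N (A i) (A j) x y = (\<Sum>k\<le>d. c k * A k x y))"

definition nonsym_class2_scheme :: "nat \<Rightarrow> (nat \<Rightarrow> mat) \<Rightarrow> bool" where
  "nonsym_class2_scheme N A \<longleftrightarrow>
     assoc_scheme N 2 A \<and>
     (\<forall>x\<in>{1..N}. \<forall>y\<in>{1..N}. A 2 x y = A 1 y x) \<and>
     (\<exists>x\<in>{1..N}. \<exists>y\<in>{1..N}. A 2 x y \<noteq> A 1 x y)"

definition B1 :: "nat \<Rightarrow> (nat \<Rightarrow> mat) \<Rightarrow> mat" where
  "B1 n A = (\<lambda>r s.
     if r \<le> n - 1 then
       (if s \<le> n - 1 then A 1 r s else if s = n then 0 else A 0 r (s - n) + A 1 r (s - n))
     else if r = n then
       (if s \<le> n - 1 then 1 else 0)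
     else
       (if s \<le> n - 1 then A 1 (r - n) s else if s = n then 1 else A 2 (r - n) (s - n)))"

definition nbhd :: "nat \<Rightarrow> (nat \<Rightarrow> mat) \<Rightarrow> nat \<Rightarrow> nat set" where
  "nbhd n A i = {j \<in> {1..2*n-1}. B1 n A i j = 1}"

definition nu :: "nat \<Rightarrow> (nat \<Rightarrow> mat) \<Rightarrow> nat \<Rightarrow> nat \<Rightarrow> nat \<Rightarrow> nat" where
  "nu n A i j k = card (nbhd n A i \<inter> nbhd n A j \<inter> nbhd n A k)"

end

theory Submission
  imports Defs
begin

(* The arc relation A_1 of a non-symmetric class 2 scheme is a doubly regular tournament: every
   vertex has out-degree 2t+1 and any two vertices have exactly t common out-neighbours, so
   n - 1 = 4t + 3 and (n-2)/2 = 2t+1.  On the three blocks {1..n-1}, {n} and n + {1..n-1} the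
   neighbourhoods of B_1 are made of out- and in-neighbourhoods of A_1, so nu(i,j,k) is a sum of
   intersection sizes in the tournament.  Counting common neighbours bounds each block pattern of
   i < j < k by 2t, except the pattern (a, n, n+a), whose common neighbourhood is the whole
   out-neighbourhood of a. *)

locale tournament =
  fixes V :: "'a set" and arc :: "'a \<Rightarrow> 'a \<Rightarrow> bool"
  assumes finite_vertices: "finite V"
    and arc_irrefl: "x \<in> V \<Longrightarrow> \<not> arc x x"
    and arc_asym_total: "x \<in> V \<Longrightarrow> y \<in> V \<Longrightarrow> x \<noteq> y \<Longrightarrow> arc x y \<longleftrightarrow> \<not> arc y x"
begin

definition out_nbhd :: "'a \<Rightarrow> 'a set" where
  "out_nbhd x = {y \<in> V. arc x y}"

definition in_nbhd :: "'a \<Rightarrow> 'a set" where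
  "in_nbhd x = {y \<in> V. arc y x}"

lemma out_nbhd_subset: "out_nbhd x \<subseteq> V"
  unfolding out_nbhd_def by blast

lemma in_nbhd_subset: "in_nbhd x \<subseteq> V"
  unfolding in_nbhd_def by blast

lemma finite_out_nbhd [simp]: "finite (out_nbhd x)"
  using out_nbhd_subset finite_vertices by (rule finite_subset)

lemma finite_in_nbhd [simp]: "finite (in_nbhd x)"
  using in_nbhd_subset finite_vertices by (rule finite_subset)

lemma self_notin_out_nbhd [simp]: "x \<notin> out_nbhd x"
  using arc_irrefl unfolding out_nbhd_def by blast

lemma self_notin_in_nbhd [simp]: "x \<notin> in_nbhd x"
  using arc_irrefl unfolding in_nbhd_def by blast

lemma in_nbhd_iff_out_nbhd: "x \<in> V \<Longrightarrow> y \<in> V \<Longrightarrow> y \<in> in_nbhd x \<longleftrightarrow> x \<in> out_nbhd y"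
  unfolding in_nbhd_def out_nbhd_def by blast

lemma out_nbhd_asym: "x \<in> V \<Longrightarrow> y \<in> out_nbhd x \<Longrightarrow> x \<notin> out_nbhd y"
  unfolding out_nbhd_def using arc_irrefl arc_asym_total by blast

lemma out_nbhd_or_in_nbhd: "x \<in> V \<Longrightarrow> y \<in> V \<Longrightarrow> x \<noteq> y \<Longrightarrow> y \<in> out_nbhd x \<or> y \<in> in_nbhd x"
  unfolding out_nbhd_def in_nbhd_def using arc_asym_total by blast

lemma out_nbhd_Int_in_nbhd: "x \<in> V \<Longrightarrow> out_nbhd x \<inter> in_nbhd x = {}"
  unfolding out_nbhd_def in_nbhd_def using arc_irrefl arc_asym_total by blast

lemma out_nbhd_Un_in_nbhd: "x \<in> V \<Longrightarrow> out_nbhd x \<union> in_nbhd x = V - {x}"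
  unfolding out_nbhd_def in_nbhd_def using arc_irrefl arc_asym_total by blast

lemma card_Int_out_nbhd_plus_Int_in_nbhd:
  assumes "x \<in> V" and "S \<subseteq> V"
  shows "card (S \<inter> out_nbhd x) + card (S \<inter> in_nbhd x) = card (S - {x})"
proof -
  have "S - {x} = (S \<inter> out_nbhd x) \<union> (S \<inter> in_nbhd x)"
    using assms out_nbhd_Un_in_nbhd by blast
  moreover have "(S \<inter> out_nbhd x) \<inter> (S \<inter> in_nbhd x) = {}"
    using out_nbhd_Int_in_nbhd[OF assms(1)] by blast
  ultimately show ?thesis
    using finite_subset[OF assms(2) finite_vertices] by (simp add: card_Un_disjoint)
qed

lemma card_out_nbhd_plus_card_in_nbhd:
  "x \<in> V \<Longrightarrow> card (out_nbhd x) + card (in_nbhd x) = card V - 1"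
  using card_Int_out_nbhd_plus_Int_in_nbhd[of x V] finite_vertices
  by (simp add: Int_absorb1 out_nbhd_subset in_nbhd_subset)

lemma sum_card_out_nbhd_eq_sum_card_in_nbhd:
  "(\<Sum>x\<in>V. card (out_nbhd x)) = (\<Sum>x\<in>V. card (in_nbhd x))"
proof -
  have "(\<Sum>x\<in>V. card (out_nbhd x)) = (\<Sum>x\<in>V. \<Sum>y\<in>V. of_bool (arc x y))"
    using finite_vertices by (simp add: out_nbhd_def Collect_conj_eq Int_commute)
  also have "\<dots> = (\<Sum>y\<in>V. \<Sum>x\<in>V. of_bool (arc x y))"
    by (rule sum.swap)
  also have "\<dots> = (\<Sum>y\<in>V. card (in_nbhd y))"
    using finite_vertices by (simp add: in_nbhd_def Collect_conj_eq Int_commute)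
  finally show ?thesis .
qed

lemma card_in_nbhd_if_regular:
  assumes out_deg: "\<And>y. y \<in> V \<Longrightarrow> card (out_nbhd y) = k" and "x \<in> V"
  shows "card (in_nbhd x) = k"
proof -
  have in_deg: "card (in_nbhd y) = card V - 1 - k" if "y \<in> V" for y
    using card_out_nbhd_plus_card_in_nbhd[OF that] out_deg[OF that] by simp
  have "card V * k = card V * (card V - 1 - k)"
    using sum_card_out_nbhd_eq_sum_card_in_nbhd out_deg in_deg by simp
  moreover have "card V > 0"
    using assms(2) finite_vertices card_gt_0_iff by blast
  ultimately show ?thesis
    using in_deg[OF assms(2)] by simp
qed

lemma card_vertices_if_regular:
  assumes out_deg: "\<And>y. y \<in> V \<Longrightarrow> card (out_nbhd y) = k" and "x \<in> V"
  shows "card V = 2 * k + 1"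
  using card_out_nbhd_plus_card_in_nbhd[OF assms(2)] out_deg[OF assms(2)]
    card_in_nbhd_if_regular[OF assms] card_gt_0_iff[of V] assms(2) finite_vertices
  by auto

lemma sum_card_out_nbhd_Int:
  "(\<Sum>y\<in>V. card (out_nbhd x \<inter> out_nbhd y)) = (\<Sum>z\<in>out_nbhd x. card (in_nbhd z))"
proof -
  have "(\<Sum>y\<in>V. card (out_nbhd x \<inter> out_nbhd y)) = (\<Sum>y\<in>V. \<Sum>z\<in>out_nbhd x. of_bool (arc y z))"
    using finite_vertices by (intro sum.cong) (auto simp: out_nbhd_def Collect_conj_eq Int_ac)
  also have "\<dots> = (\<Sum>z\<in>out_nbhd x. \<Sum>y\<in>V. of_bool (arc y z))"
    by (rule sum.swap)
  also have "\<dots> = (\<Sum>z\<in>out_nbhd x. card (in_nbhd z))"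
    using finite_vertices by (simp add: in_nbhd_def Collect_conj_eq Int_commute)
  finally show ?thesis .
qed

lemma out_degree_if_common_out_card:
  assumes out_deg: "\<And>y. y \<in> V \<Longrightarrow> card (out_nbhd y) = k"
    and common: "\<And>x y. x \<in> V \<Longrightarrow> y \<in> V \<Longrightarrow> x \<noteq> y \<Longrightarrow> card (out_nbhd x \<inter> out_nbhd y) = t"
    and "2 \<le> card V"
  shows "k = 2 * t + 1"
proof -
  obtain x where x: "x \<in> V"
    using assms(3) by fastforce
  have card_V: "card V = 2 * k + 1"
    using card_vertices_if_regular[OF out_deg x] .
  have common_x: "(\<Sum>y\<in>V - {x}. card (out_nbhd x \<inter> out_nbhd y)) = (\<Sum>y\<in>V - {x}. t)"
    using x common by (intro sum.cong) auto
  have "k * k = (\<Sum>z\<in>out_nbhd x. card (in_nbhd z))"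
    using card_in_nbhd_if_regular[OF out_deg] out_deg[OF x] out_nbhd_subset by (simp add: subset_iff)
  also have "\<dots> = (\<Sum>y\<in>V. card (out_nbhd x \<inter> out_nbhd y))"
    by (rule sum_card_out_nbhd_Int[symmetric])
  also have "\<dots> = card (out_nbhd x) + (\<Sum>y\<in>V - {x}. t)"
    using x finite_vertices common_x by (simp add: sum.remove)
  also have "\<dots> = k * (2 * t + 1)"
    using out_deg[OF x] card_V finite_vertices x by simp
  finally have "k * k = k * (2 * t + 1)" .
  moreover have "k > 0"
    using card_V assms(3) by simp
  ultimately show ?thesis
    by (metis mult_cancel_left neq0_conv)
qed

end

locale doubly_regular_tournament = tournament +
  fixes t :: nat
  assumes card_out_nbhd: "x \<in> V \<Longrightarrow> card (out_nbhd x) = 2 * t + 1"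
    and card_out_nbhd_Int: "x \<in> V \<Longrightarrow> y \<in> V \<Longrightarrow> x \<noteq> y \<Longrightarrow> card (out_nbhd x \<inter> out_nbhd y) = t"
begin

lemma card_in_nbhd: "x \<in> V \<Longrightarrow> card (in_nbhd x) = 2 * t + 1"
  using card_in_nbhd_if_regular card_out_nbhd by blast

lemma card_vertices: "x \<in> V \<Longrightarrow> card V = 4 * t + 3"
  using card_vertices_if_regular card_out_nbhd by fastforce

lemma card_in_nbhd_Int:
  assumes "x \<in> V" "y \<in> V" "x \<noteq> y"
  shows "card (in_nbhd x \<inter> in_nbhd y) = t"
proof -
  have arc_case: "card (in_nbhd x \<inter> in_nbhd y) = t"
    if "x \<in> V" "y \<in> V" "x \<noteq> y" "y \<in> out_nbhd x" for x y
  proof -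
    have "x \<notin> out_nbhd y" "y \<notin> in_nbhd x"
      using that out_nbhd_asym in_nbhd_iff_out_nbhd by blast+
    then have "card (out_nbhd y \<inter> out_nbhd x) + card (out_nbhd y \<inter> in_nbhd x) = 2 * t + 1"
        and "card (in_nbhd x \<inter> out_nbhd y) + card (in_nbhd x \<inter> in_nbhd y) = 2 * t + 1"
      using card_Int_out_nbhd_plus_Int_in_nbhd[OF that(1) out_nbhd_subset, of y]
        card_Int_out_nbhd_plus_Int_in_nbhd[OF that(2) in_nbhd_subset, of x]
        card_out_nbhd[OF that(2)] card_in_nbhd[OF that(1)] by simp_all
    then show ?thesis
      using card_out_nbhd_Int[OF that(2,1)] that(3) by (simp add: Int_commute)
  qed
  show ?thesis
    using arc_case[OF assms] arc_case[OF assms(2,1)] assms out_nbhd_or_in_nbhd in_nbhd_iff_out_nbhd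
    by (metis Int_commute)
qed

lemma card_out_nbhd_Int_le:
  "a \<in> V \<Longrightarrow> b \<in> V \<Longrightarrow> a \<noteq> b \<Longrightarrow> card (out_nbhd a \<inter> out_nbhd b \<inter> X) \<le> t"
  using card_mono[OF _ Int_lower1, of "out_nbhd a \<inter> out_nbhd b" X] card_out_nbhd_Int by simp

lemma card_in_nbhd_Int_le:
  "a \<in> V \<Longrightarrow> b \<in> V \<Longrightarrow> a \<noteq> b \<Longrightarrow> card (in_nbhd a \<inter> in_nbhd b \<inter> X) \<le> t"
  using card_mono[OF _ Int_lower1, of "in_nbhd a \<inter> in_nbhd b" X] card_in_nbhd_Int by simp

lemma out_nbhd_Int_subset_if_card:
  assumes "a \<in> V" "b \<in> V" "a \<noteq> b" and "card (out_nbhd a \<inter> out_nbhd b \<inter> X) = t"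
  shows "out_nbhd a \<inter> out_nbhd b \<subseteq> X"
  using card_subset_eq[of "out_nbhd a \<inter> out_nbhd b" "out_nbhd a \<inter> out_nbhd b \<inter> X"]
    card_out_nbhd_Int[OF assms(1-3)] assms(4) by auto

lemma in_nbhd_Int_subset_if_card:
  assumes "a \<in> V" "b \<in> V" "a \<noteq> b" and "card (in_nbhd a \<inter> in_nbhd b \<inter> X) = t"
  shows "in_nbhd a \<inter> in_nbhd b \<subseteq> X"
  using card_subset_eq[of "in_nbhd a \<inter> in_nbhd b" "in_nbhd a \<inter> in_nbhd b \<inter> X"]
    card_in_nbhd_Int[OF assms(1-3)] assms(4) by auto

lemma card_out3_plus_closed3_le:
  assumes V: "a \<in> V" "b \<in> V" "c \<in> V" and distinct: "a \<noteq> b" "a \<noteq> c" "b \<noteq> c"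
  shows "card (out_nbhd a \<inter> out_nbhd b \<inter> out_nbhd c)
    + card (insert a (out_nbhd a) \<inter> insert b (out_nbhd b) \<inter> insert c (out_nbhd c)) \<le> 2 * t"
proof -
  have sink: "card (out_nbhd x \<inter> out_nbhd y \<inter> out_nbhd z)
      + card (insert x (out_nbhd x) \<inter> insert y (out_nbhd y) \<inter> insert z (out_nbhd z)) \<le> 2 * t"
    if "x \<in> V" "y \<in> V" "z \<in> V" "y \<noteq> z" "x \<in> out_nbhd y" "x \<in> out_nbhd z" for x y z
  proof -
    let ?O = "out_nbhd x \<inter> out_nbhd y \<inter> out_nbhd z"
    have "y \<notin> out_nbhd x" "z \<notin> out_nbhd x"
      using that out_nbhd_asym by blast+
    then have "card (insert x (out_nbhd x) \<inter> insert y (out_nbhd y) \<inter> insert z (out_nbhd z))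
        \<le> card (insert x ?O)"
      by (intro card_mono) auto
    also have "\<dots> \<le> card ?O + 1"
      by (simp add: card_insert_if)
    also have "\<dots> \<le> card (out_nbhd y \<inter> out_nbhd z)"
    proof -
      have "card ?O \<le> card (out_nbhd y \<inter> out_nbhd z - {x})"
        by (intro card_mono) auto
      also have "\<dots> < card (out_nbhd y \<inter> out_nbhd z)"
        using that by (intro card_Diff1_less) auto
      finally show ?thesis
        by simp
    qed
    finally show ?thesis
      using card_out_nbhd_Int[OF that(2-4)] card_out_nbhd_Int_le[OF that(2-4), of "out_nbhd x"]
      by (simp add: Int_ac)
  qed
  let ?Y = "insert a (out_nbhd a) \<inter> insert b (out_nbhd b) \<inter> insert c (out_nbhd c)"
  consider "a \<in> ?Y" | "b \<in> ?Y" | "c \<in> ?Y" | "?Y \<subseteq> out_nbhd a \<inter> out_nbhd b \<inter> out_nbhd c"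
    by blast
  then show ?thesis
  proof cases
    case 1
    then show ?thesis
      using sink[OF V] distinct by blast
  next
    case 2
    then show ?thesis
      using sink[OF V(2,1,3)] distinct by (simp add: Int_ac insert_commute)
  next
    case 3
    then show ?thesis
      using sink[OF V(3,1,2)] distinct by (simp add: Int_ac insert_commute)
  next
    case 4
    then have "card ?Y \<le> card (out_nbhd a \<inter> out_nbhd b \<inter> out_nbhd c)"
      by (intro card_mono) auto
    with card_out_nbhd_Int_le[OF V(1,2) distinct(1), of "out_nbhd c"] show ?thesis
      by linarith
  qed
qed

lemma card_out3_plus_closed2_in_le:
  assumes V: "a \<in> V" "b \<in> V" "c \<in> V" "a \<noteq> b" and "t \<ge> 1"
  shows "card (out_nbhd a \<inter> out_nbhd b \<inter> out_nbhd c)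
    + card (insert a (out_nbhd a) \<inter> insert b (out_nbhd b) \<inter> in_nbhd c) \<le> 2 * t"
proof -
  have arc_case: "card (out_nbhd x \<inter> out_nbhd y \<inter> out_nbhd c)
      + card (insert x (out_nbhd x) \<inter> insert y (out_nbhd y) \<inter> in_nbhd c) \<le> 2 * t"
    if "x \<in> V" "y \<in> V" "x \<noteq> y" "y \<in> out_nbhd x" for x y
  proof -
    let ?S = "out_nbhd x \<inter> out_nbhd y"
    have "x \<notin> out_nbhd y"
      using that out_nbhd_asym by blast
    then have "insert x (out_nbhd x) \<inter> insert y (out_nbhd y) \<inter> in_nbhd c \<subseteq> insert y (?S \<inter> in_nbhd c)"
      using that(3) by blast
    then have "card (insert x (out_nbhd x) \<inter> insert y (out_nbhd y) \<inter> in_nbhd c)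
        \<le> card (insert y (?S \<inter> in_nbhd c))"
      by (intro card_mono) auto
    also have "\<dots> \<le> card (?S \<inter> in_nbhd c) + 1"
      by (simp add: card_insert_if)
    finally have "card (insert x (out_nbhd x) \<inter> insert y (out_nbhd y) \<inter> in_nbhd c)
        \<le> card (?S \<inter> in_nbhd c) + 1" .
    moreover have "card (?S \<inter> out_nbhd c) + card (?S \<inter> in_nbhd c) \<le> t"
      using card_Int_out_nbhd_plus_Int_in_nbhd[OF V(3), of ?S] card_out_nbhd_Int[OF that(1-3)]
        out_nbhd_subset card_Diff1_le[of ?S c] by fastforce
    ultimately show ?thesis
      using \<open>t \<ge> 1\<close> by linarith
  qed
  show ?thesis
    using arc_case[OF V(1,2,4)] arc_case[OF V(2,1) V(4)[symmetric]] out_nbhd_or_in_nbhd[OF V(1,2,4)]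
      in_nbhd_iff_out_nbhd[OF V(1,2)] by (auto simp: Int_commute)
qed

(* If both intersections had size t, then out c could exceed out a \<inter> out b only by a and b,
   but a and b cannot both lie in out c since in a \<inter> in b \<subseteq> in c. *)
lemma card_out3_plus_in3_less:
  assumes V: "a \<in> V" "b \<in> V" "c \<in> V" and distinct: "a \<noteq> b" "a \<noteq> c" "b \<noteq> c"
    and "t \<ge> 1"
  shows "card (out_nbhd a \<inter> out_nbhd b \<inter> out_nbhd c) + card (in_nbhd a \<inter> in_nbhd b \<inter> in_nbhd c) < 2 * t"
proof (rule ccontr)
  assume "\<not> ?thesis"
  with card_out_nbhd_Int_le[OF V(1,2) distinct(1), of "out_nbhd c"]
    card_in_nbhd_Int_le[OF V(1,2) distinct(1), of "in_nbhd c"]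
  have out3: "card (out_nbhd a \<inter> out_nbhd b \<inter> out_nbhd c) = t"
    and in3: "card (in_nbhd a \<inter> in_nbhd b \<inter> in_nbhd c) = t"
    by linarith+
  have out_ab: "out_nbhd a \<inter> out_nbhd b \<subseteq> out_nbhd c"
    using out_nbhd_Int_subset_if_card[OF V(1,2) distinct(1) out3] .
  have "card (out_nbhd a \<inter> out_nbhd c \<inter> out_nbhd b) = t" "card (out_nbhd b \<inter> out_nbhd c \<inter> out_nbhd a) = t"
    using out3 by (simp_all add: Int_ac)
  then have out_ac: "out_nbhd a \<inter> out_nbhd c \<subseteq> out_nbhd b"
    and out_bc: "out_nbhd b \<inter> out_nbhd c \<subseteq> out_nbhd a"
    using out_nbhd_Int_subset_if_card[OF V(1,3) distinct(2)] out_nbhd_Int_subset_if_card[OF V(2,3) distinct(3)]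
    by simp_all
  have in_ab: "in_nbhd a \<inter> in_nbhd b \<subseteq> in_nbhd c"
    using in_nbhd_Int_subset_if_card[OF V(1,2) distinct(1) in3] .
  let ?S = "out_nbhd a \<inter> out_nbhd b"
  have "out_nbhd c - ?S \<subseteq> {a, b}"
  proof
    fix y
    assume y: "y \<in> out_nbhd c - ?S"
    then have "y \<notin> out_nbhd a" "y \<notin> out_nbhd b" "y \<in> V" "y \<noteq> c"
      using out_ac out_bc out_nbhd_subset by auto
    moreover have "y \<notin> in_nbhd c"
      using y out_nbhd_Int_in_nbhd[OF V(3)] by blast
    ultimately show "y \<in> {a, b}"
      using in_ab out_nbhd_or_in_nbhd[OF V(1) \<open>y \<in> V\<close>] out_nbhd_or_in_nbhd[OF V(2) \<open>y \<in> V\<close>] by blast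
  qed
  moreover have "\<not> (a \<in> out_nbhd c \<and> b \<in> out_nbhd c)"
    using in_ab in_nbhd_iff_out_nbhd[OF V(1,3)] in_nbhd_iff_out_nbhd[OF V(2,3)] self_notin_in_nbhd by blast
  ultimately have "out_nbhd c - ?S \<subseteq> {a} \<or> out_nbhd c - ?S \<subseteq> {b}"
    by blast
  then have "card (out_nbhd c - ?S) \<le> 1"
    using card_mono[of "{a}" "out_nbhd c - ?S"] card_mono[of "{b}" "out_nbhd c - ?S"] by auto
  moreover have "card (out_nbhd c - ?S) = t + 1"
    using card_Diff_subset[of ?S "out_nbhd c"] out_ab card_out_nbhd[OF V(3)]
      card_out_nbhd_Int[OF V(1,2) distinct(1)] by simp
  ultimately show False
    using \<open>t \<ge> 1\<close> by simp
qed

end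

lemma (in tournament) doubly_regular_if_out_nbhd_Int_linear:
  fixes c0 c1 c2 :: real
  assumes "2 \<le> card V"
    and linear: "\<And>x y. x \<in> V \<Longrightarrow> y \<in> V \<Longrightarrow>
      card (out_nbhd x \<inter> out_nbhd y) = c0 * of_bool (x = y) + c1 * of_bool (arc x y) + c2 * of_bool (arc y x)"
  obtains t where "doubly_regular_tournament V arc t"
proof -
  \<comment> \<open>The diagonal gives constant out-degree c0, and symmetry of the left side forces c1 = c2.\<close>
  obtain x y where xy: "x \<in> V" "y \<in> V" "x \<noteq> y"
    using assms(1) finite_vertices card_le_Suc0_iff_eq[of V] by auto
  have arc_count: "of_bool (arc u v) + of_bool (arc v u) = (1::real)" if "u \<in> V" "v \<in> V" "u \<noteq> v" for u v
    using arc_asym_total[OF that] by auto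
  have out_deg: "card (out_nbhd z) = card (out_nbhd x)" if "z \<in> V" for z
    using linear[OF that that] linear[OF xy(1) xy(1)] arc_irrefl that xy(1) by simp
  have "c1 = c2"
    using linear[OF xy(1,2)] linear[OF xy(2,1)] arc_asym_total[OF xy] xy(3) not_sym[OF xy(3)]
    by (cases "arc x y") (auto simp: Int_commute)
  then have common: "card (out_nbhd u \<inter> out_nbhd v) = card (out_nbhd x \<inter> out_nbhd y)"
    if "u \<in> V" "v \<in> V" "u \<noteq> v" for u v
    using linear[OF that(1,2)] linear[OF xy(1,2)] arc_count[OF that] arc_count[OF xy] that xy
    by (simp add: distrib_left[symmetric])
  have "card (out_nbhd x) = 2 * card (out_nbhd x \<inter> out_nbhd y) + 1"
    using out_degree_if_common_out_card[OF out_deg common assms(1)] .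
  then have "doubly_regular_tournament V arc (card (out_nbhd x \<inter> out_nbhd y))"
    using out_deg common by unfold_locales auto
  then show thesis ..
qed

lemma nonsym_class2_scheme_entries:
  assumes "nonsym_class2_scheme m A" and "x \<in> {1..m}" "y \<in> {1..m}"
  shows "A 0 x y = of_bool (x = y)" and "A 2 x y = A 1 y x" and "A 1 x y = 0 \<or> A 1 x y = 1"
    and "A 1 x y + A 1 y x = of_bool (x \<noteq> y)"
proof -
  have zero_one: "\<forall>i\<le>2. \<forall>x\<in>{1..m}. \<forall>y\<in>{1..m}. A i x y = 0 \<or> A i x y = 1"
    and identity: "\<forall>x\<in>{1..m}. \<forall>y\<in>{1..m}. A 0 x y = (if x = y then 1 else 0)"
    and partition: "\<forall>x\<in>{1..m}. \<forall>y\<in>{1..m}. (\<Sum>i\<le>2. A i x y) = 1"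
    and transpose: "\<forall>x\<in>{1..m}. \<forall>y\<in>{1..m}. A 2 x y = A 1 y x"
    using assms(1) unfolding nonsym_class2_scheme_def assoc_scheme_def by blast+
  show "A 0 x y = of_bool (x = y)" "A 2 x y = A 1 y x" "A 1 x y = 0 \<or> A 1 x y = 1"
    using identity transpose zero_one assms(2,3) by auto
  have "A 0 x y + A 1 x y + A 2 x y = 1"
    using partition assms(2,3) by (simp add: numeral_2_eq_2)
  then show "A 1 x y + A 1 y x = of_bool (x \<noteq> y)"
    using identity transpose assms(2,3) by auto
qed

lemma nonsym_class2_scheme_tournament:
  assumes "nonsym_class2_scheme m A"
  shows "tournament {1..m} (\<lambda>x y. A 1 x y = 1)"
proof
  fix x y
  assume x: "x \<in> {1..m}" and y: "y \<in> {1..m}"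
  show "A 1 x x \<noteq> 1"
    using nonsym_class2_scheme_entries(4)[OF assms x x] by simp
  assume "x \<noteq> y"
  then show "A 1 x y = 1 \<longleftrightarrow> A 1 y x \<noteq> 1"
    using nonsym_class2_scheme_entries(3,4)[OF assms x y] by auto
qed simp

lemma nonsym_class2_scheme_doubly_regular:
  assumes scheme: "nonsym_class2_scheme m A" and "2 \<le> m"
  obtains t where "doubly_regular_tournament {1..m} (\<lambda>x y. A 1 x y = 1) t"
proof -
  interpret tournament "{1..m}" "\<lambda>x y. A 1 x y = 1"
    using nonsym_class2_scheme_tournament[OF scheme] .
  note entries = nonsym_class2_scheme_entries[OF scheme]
  have closed: "\<forall>i\<le>2. \<forall>j\<le>2. \<exists>c :: nat \<Rightarrow> real. \<forall>x\<in>{1..m}. \<forall>y\<in>{1..m}.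
      mat_mult m (A i) (A j) x y = (\<Sum>k\<le>2. c k * A k x y)"
    using scheme unfolding nonsym_class2_scheme_def assoc_scheme_def by blast
  obtain c where c: "\<And>x y. x \<in> {1..m} \<Longrightarrow> y \<in> {1..m} \<Longrightarrow>
      mat_mult m (A 1) (A 2) x y = (\<Sum>k\<le>2. c k * A k x y)"
    using closed[rule_format, of 1 2] by auto
  have linear: "card (out_nbhd x \<inter> out_nbhd y)
      = c 0 * of_bool (x = y) + c 1 * of_bool (A 1 x y = 1) + c 2 * of_bool (A 1 y x = 1)"
    if x: "x \<in> {1..m}" and y: "y \<in> {1..m}" for x y
  proof -
    have "out_nbhd x \<inter> out_nbhd y = {1..m} \<inter> {z. A 1 x z = 1 \<and> A 1 y z = 1}"
      unfolding out_nbhd_def by auto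
    then have "card (out_nbhd x \<inter> out_nbhd y) = (\<Sum>z=1..m. of_bool (A 1 x z = 1 \<and> A 1 y z = 1) :: real)"
      by simp
    also have "\<dots> = mat_mult m (A 1) (A 2) x y"
      unfolding mat_mult_def
    proof (intro sum.cong refl)
      fix z
      assume z: "z \<in> {1..m}"
      show "of_bool (A 1 x z = 1 \<and> A 1 y z = 1) = A 1 x z * A 2 z y"
        using entries(2)[OF z y] entries(3)[OF x z] entries(3)[OF y z] by auto
    qed
    also have "\<dots> = c 0 * A 0 x y + c 1 * A 1 x y + c 2 * A 2 x y"
      using c[OF x y] by (simp add: numeral_2_eq_2)
    also have "\<dots> = c 0 * of_bool (x = y) + c 1 * of_bool (A 1 x y = 1) + c 2 * of_bool (A 1 y x = 1)"
      using entries(1,2,3)[OF x y] entries(3)[OF y x] by auto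
    finally show ?thesis .
  qed
  have "2 \<le> card {1..m}"
    using assms(2) by simp
  with linear show thesis
    using doubly_regular_if_out_nbhd_Int_linear[of "c 0" "c 1" "c 2"] that by blast
qed

definition block_set :: "nat \<Rightarrow> nat set \<Rightarrow> nat set \<Rightarrow> nat set \<Rightarrow> nat set" where
  "block_set n X P Y = X \<union> P \<union> (+) n ` Y"

lemma block_set_Int:
  assumes "X \<union> X' \<subseteq> {1..n-1}" "P \<union> P' \<subseteq> {n}" "Y \<union> Y' \<subseteq> {1..n-1}"
  shows "block_set n X P Y \<inter> block_set n X' P' Y' = block_set n (X \<inter> X') (P \<inter> P') (Y \<inter> Y')"
proof -
  have "(X \<union> X') \<inter> (P \<union> P') = {}" "(X \<union> X') \<inter> (+) n ` (Y \<union> Y') = {}"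
    "(P \<union> P') \<inter> (+) n ` (Y \<union> Y') = {}"
    using assms by force+
  then show ?thesis
    unfolding block_set_def image_Int[OF inj_on_add] by blast
qed

lemma card_block_set:
  assumes "X \<subseteq> {1..n-1}" "P \<subseteq> {n}" "Y \<subseteq> {1..n-1}"
  shows "card (block_set n X P Y) = card X + card P + card Y"
proof -
  have "finite X" "finite P" "finite Y"
    using assms by (auto intro: finite_subset)
  moreover have "X \<inter> P = {}" "(X \<union> P) \<inter> (+) n ` Y = {}"
    using assms by force+
  ultimately show ?thesis
    unfolding block_set_def by (simp add: card_Un_disjoint card_image)
qed

lemma card_Int3_block_set:
  assumes "X1 \<union> X2 \<union> X3 \<subseteq> {1..n-1}" "P1 \<union> P2 \<union> P3 \<subseteq> {n}" "Y1 \<union> Y2 \<union> Y3 \<subseteq> {1..n-1}"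
  shows "card (block_set n X1 P1 Y1 \<inter> block_set n X2 P2 Y2 \<inter> block_set n X3 P3 Y3)
    = card (X1 \<inter> X2 \<inter> X3) + card (P1 \<inter> P2 \<inter> P3) + card (Y1 \<inter> Y2 \<inter> Y3)"
proof -
  have "block_set n X1 P1 Y1 \<inter> block_set n X2 P2 Y2 = block_set n (X1 \<inter> X2) (P1 \<inter> P2) (Y1 \<inter> Y2)"
    using assms by (intro block_set_Int) auto
  also have "\<dots> \<inter> block_set n X3 P3 Y3 = block_set n (X1 \<inter> X2 \<inter> X3) (P1 \<inter> P2 \<inter> P3) (Y1 \<inter> Y2 \<inter> Y3)"
    using assms by (intro block_set_Int) auto
  finally show ?thesis
    using assms by (simp add: card_block_set le_infI1)
qed

lemma nbhd_eq_block_set: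
  assumes "1 \<le> n"
    and low: "\<And>s. s \<in> {1..n-1} \<Longrightarrow> B1 n A r s = 1 \<longleftrightarrow> s \<in> X"
    and mid: "B1 n A r n = 1 \<longleftrightarrow> n \<in> P"
    and high: "\<And>b. b \<in> {1..n-1} \<Longrightarrow> B1 n A r (n + b) = 1 \<longleftrightarrow> b \<in> Y"
    and ranges: "X \<subseteq> {1..n-1}" "P \<subseteq> {n}" "Y \<subseteq> {1..n-1}"
  shows "nbhd n A r = block_set n X P Y"
proof (rule set_eqI)
  fix s
  consider "s \<in> {1..n-1}" | "s = n" | b where "b \<in> {1..n-1}" "s = n + b" | "s \<notin> {1..2*n-1}"
  proof -
    have "s \<in> {1..n-1} \<or> s = n \<or> (s - n \<in> {1..n-1} \<and> s = n + (s - n)) \<or> s \<notin> {1..2*n-1}"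
      by auto
    then show thesis
      using that by blast
  qed
  then show "s \<in> nbhd n A r \<longleftrightarrow> s \<in> block_set n X P Y"
  proof cases
    case 1
    moreover have "s \<notin> P" "s \<notin> (+) n ` Y"
      using 1 ranges by auto
    ultimately show ?thesis
      using low[OF 1] unfolding nbhd_def block_set_def by auto
  next
    case 2
    moreover have "n \<notin> X" "n \<notin> (+) n ` Y"
      using ranges by fastforce+
    ultimately show ?thesis
      using mid \<open>1 \<le> n\<close> unfolding nbhd_def block_set_def by auto
  next
    case (3 b)
    moreover have "n + b \<notin> X" "n + b \<notin> P"
      using 3 ranges by auto
    ultimately show ?thesis
      using high[OF 3(1)] unfolding nbhd_def block_set_def by auto
  next
    case 4
    moreover have "s \<notin> X" "s \<notin> P" "s \<notin> (+) n ` Y"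
      using 4 ranges \<open>1 \<le> n\<close> by fastforce+
    ultimately show ?thesis
      unfolding nbhd_def block_set_def by auto
  qed
qed

lemma nbhd_B1_mid:
  assumes "1 \<le> n"
  shows "nbhd n A n = block_set n {1..n-1} {} {}"
  by (rule nbhd_eq_block_set) (use assms in \<open>auto simp: B1_def\<close>)

context
  fixes n :: nat and A :: "nat \<Rightarrow> mat"
  assumes scheme: "nonsym_class2_scheme (n - 1) A"
begin

interpretation tournament "{1..n-1}" "\<lambda>x y. A 1 x y = 1"
  by (rule nonsym_class2_scheme_tournament[OF scheme])

(* Otherwise simp turns {1..n-1} into {Suc 0..n - Suc 0}, which the interpreted facts do not match. *)
declare One_nat_def [simp del]

lemma nbhd_B1_low:
  assumes a: "a \<in> {1..n-1}"
  shows "nbhd n A a = block_set n (out_nbhd a) {} (insert a (out_nbhd a))"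
proof (rule nbhd_eq_block_set)
  show "B1 n A a s = 1 \<longleftrightarrow> s \<in> out_nbhd a" if "s \<in> {1..n-1}" for s
    using a that unfolding B1_def out_nbhd_def by auto
  show "B1 n A a (n + b) = 1 \<longleftrightarrow> b \<in> insert a (out_nbhd a)" if b: "b \<in> {1..n-1}" for b
  proof -
    have "B1 n A a (n + b) = A 0 a b + A 1 a b"
      using a b unfolding B1_def by auto
    then show ?thesis
      using nonsym_class2_scheme_entries(1,3)[OF scheme a b] nonsym_class2_scheme_entries(4)[OF scheme a a]
        b unfolding out_nbhd_def by auto
  qed
qed (use a out_nbhd_subset in \<open>auto simp: B1_def\<close>)

lemma nbhd_B1_high:
  assumes a: "a \<in> {1..n-1}"
  shows "nbhd n A (n + a) = block_set n (out_nbhd a) {n} (in_nbhd a)"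
proof (rule nbhd_eq_block_set)
  show "B1 n A (n + a) s = 1 \<longleftrightarrow> s \<in> out_nbhd a" if "s \<in> {1..n-1}" for s
    using a that unfolding B1_def out_nbhd_def by auto
  show "B1 n A (n + a) (n + b) = 1 \<longleftrightarrow> b \<in> in_nbhd a" if b: "b \<in> {1..n-1}" for b
    using a b nonsym_class2_scheme_entries(2)[OF scheme a b] unfolding B1_def in_nbhd_def by auto
qed (use a out_nbhd_subset in_nbhd_subset in \<open>auto simp: B1_def\<close>)

context
  fixes t :: nat
  assumes drt: "doubly_regular_tournament {1..n-1} (\<lambda>x y. A 1 x y = 1) t" and t_pos: "1 \<le> t"
begin

interpretation doubly_regular_tournament "{1..n-1}" "\<lambda>x y. A 1 x y = 1" t
  by (rule drt)

lemmas nu_B1_eqs = nu_def nbhd_B1_low nbhd_B1_high card_Int3_block_set out_nbhd_subset in_nbhd_subset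

lemma nu_B1_low_low_low:
  assumes V: "a \<in> {1..n-1}" "b \<in> {1..n-1}" "c \<in> {1..n-1}" and "a \<noteq> b" "a \<noteq> c" "b \<noteq> c"
  shows "nu n A a b c \<le> 2 * t"
proof -
  have "nu n A a b c = card (out_nbhd a \<inter> out_nbhd b \<inter> out_nbhd c)
      + card (insert a (out_nbhd a) \<inter> insert b (out_nbhd b) \<inter> insert c (out_nbhd c))"
    using V by (simp add: nu_B1_eqs)
  with card_out3_plus_closed3_le[OF assms] show ?thesis
    by simp
qed

lemma nu_B1_low_low_mid:
  assumes V: "a \<in> {1..n-1}" "b \<in> {1..n-1}" and "a \<noteq> b"
  shows "nu n A a b n \<le> t"
proof -
  have "1 \<le> n"
    using V by auto
  have "nu n A a b n = card (out_nbhd a \<inter> out_nbhd b \<inter> {1..n-1})"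
    using V nbhd_B1_mid[OF \<open>1 \<le> n\<close>] by (simp add: nu_B1_eqs)
  with card_out_nbhd_Int_le[OF assms] show ?thesis
    by simp
qed

lemma nu_B1_low_low_high:
  assumes V: "a \<in> {1..n-1}" "b \<in> {1..n-1}" "c \<in> {1..n-1}" and "a \<noteq> b"
  shows "nu n A a b (n + c) \<le> 2 * t"
proof -
  have "nu n A a b (n + c) = card (out_nbhd a \<inter> out_nbhd b \<inter> out_nbhd c)
      + card (insert a (out_nbhd a) \<inter> insert b (out_nbhd b) \<inter> in_nbhd c)"
    using V by (simp add: nu_B1_eqs)
  with card_out3_plus_closed2_in_le[OF assms t_pos] show ?thesis
    by simp
qed

lemma nu_B1_low_mid_high:
  assumes V: "a \<in> {1..n-1}" "c \<in> {1..n-1}"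
  shows "nu n A a n (n + c) = (if a = c then 2 * t + 1 else t)"
proof -
  have "1 \<le> n"
    using V by auto
  have "nu n A a n (n + c) = card (out_nbhd a \<inter> {1..n-1} \<inter> out_nbhd c)"
    using V nbhd_B1_mid[OF \<open>1 \<le> n\<close>] by (simp add: nu_B1_eqs)
  also have "\<dots> = card (out_nbhd a \<inter> out_nbhd c)"
    using out_nbhd_subset[of a] by (simp add: Int_absorb2)
  finally show ?thesis
    using card_out_nbhd[OF V(1)] card_out_nbhd_Int[OF V] by (cases "a = c") auto
qed

lemma nu_B1_low_high_high:
  assumes V: "a \<in> {1..n-1}" "b \<in> {1..n-1}" "c \<in> {1..n-1}" and "b \<noteq> c"
  shows "nu n A a (n + b) (n + c) \<le> 2 * t"
proof -
  have "nu n A a (n + b) (n + c) = card (out_nbhd a \<inter> out_nbhd b \<inter> out_nbhd c)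
      + card (insert a (out_nbhd a) \<inter> in_nbhd b \<inter> in_nbhd c)"
    using V by (simp add: nu_B1_eqs)
  with card_out_nbhd_Int_le[OF V(2,3) \<open>b \<noteq> c\<close>, of "out_nbhd a"]
    card_in_nbhd_Int_le[OF V(2,3) \<open>b \<noteq> c\<close>, of "insert a (out_nbhd a)"]
  show ?thesis
    by (simp add: Int_ac)
qed

lemma nu_B1_mid_high_high:
  assumes V: "b \<in> {1..n-1}" "c \<in> {1..n-1}" and "b \<noteq> c"
  shows "nu n A n (n + b) (n + c) \<le> t"
proof -
  have "1 \<le> n"
    using V by auto
  have "nu n A n (n + b) (n + c) = card ({1..n-1} \<inter> out_nbhd b \<inter> out_nbhd c)"
    using V nbhd_B1_mid[OF \<open>1 \<le> n\<close>] by (simp add: nu_B1_eqs)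
  with card_out_nbhd_Int_le[OF assms, of "{1..n-1}"] show ?thesis
    by (simp add: Int_ac)
qed

lemma nu_B1_high_high_high:
  assumes V: "a \<in> {1..n-1}" "b \<in> {1..n-1}" "c \<in> {1..n-1}" and "a \<noteq> b" "a \<noteq> c" "b \<noteq> c"
  shows "nu n A (n + a) (n + b) (n + c) < 2 * t + 1"
proof -
  have "nu n A (n + a) (n + b) (n + c) = card (out_nbhd a \<inter> out_nbhd b \<inter> out_nbhd c) + 1
      + card (in_nbhd a \<inter> in_nbhd b \<inter> in_nbhd c)"
    using V by (simp add: nu_B1_eqs)
  with card_out3_plus_in3_less[OF assms t_pos] show ?thesis
    by simp
qed

lemma nu_B1_bound:
  assumes ijk: "1 \<le> i" "i < j" "j < k" "k \<le> 2 * n - 1"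
  shows "if \<exists>a\<in>{1..n-1}. i = a \<and> j = n \<and> k = n + a then nu n A i j k = 2 * t + 1
    else nu n A i j k \<le> 2 * t"
proof -
  have high: "\<exists>a\<in>{1..n-1}. x = n + a" if "n < x" "x \<le> 2 * n - 1" for x
    using that by (intro bexI[of _ "x - n"]) auto
  consider "k \<le> n - 1" | "j \<le> n - 1" "k = n" | "j \<le> n - 1" "n < k" | "i \<le> n - 1" "j = n"
    | "i \<le> n - 1" "n < j" | "i = n" | "n < i"
    using ijk by linarith
  then show ?thesis
  proof cases
    case 1
    then show ?thesis
      using nu_B1_low_low_low[of i j k] ijk by auto
  next
    case 2
    then show ?thesis
      using nu_B1_low_low_mid[of i j] ijk by auto
  next
    case 3
    then show ?thesis
      using high[of k] nu_B1_low_low_high[of i j] ijk by auto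
  next
    case 4
    then show ?thesis
      using high[of k] nu_B1_low_mid_high[of i] ijk by auto
  next
    case 5
    then obtain b c where "b \<in> {1..n-1}" "c \<in> {1..n-1}" "j = n + b" "k = n + c"
      using high[of j] high[of k] ijk by auto
    then show ?thesis
      using nu_B1_low_high_high[of i b c] 5 ijk by auto
  next
    case 6
    then obtain b c where "b \<in> {1..n-1}" "c \<in> {1..n-1}" "j = n + b" "k = n + c"
      using high[of j] high[of k] ijk by auto
    then show ?thesis
      using nu_B1_mid_high_high[of b c] 6 ijk by auto
  next
    case 7
    then obtain a b c where "a \<in> {1..n-1}" "b \<in> {1..n-1}" "c \<in> {1..n-1}"
      "i = n + a" "j = n + b" "k = n + c"
      using high[of i] high[of j] high[of k] ijk by auto
    then show ?thesis
      using nu_B1_high_high_high[of a b c] 7 ijk by auto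
  qed
qed

end

end

theorem lemma1:
  fixes n :: nat and A :: "nat \<Rightarrow> mat"
  assumes "n \<ge> 8"
    and "nonsym_class2_scheme (n - 1) A"
  shows "\<forall>i j k. 1 \<le> i \<and> i < j \<and> j < k \<and> k \<le> 2*n - 1 \<longrightarrow>
           real (nu n A i j k) \<le> (real n - 2) / 2 \<and>
           (real (nu n A i j k) = (real n - 2) / 2 \<longleftrightarrow>
              (\<exists>a\<in>{1..n-1}. i = a \<and> j = n \<and> k = n + a))"
proof -
  have "2 \<le> n - 1"
    using assms(1) by simp
  then obtain t where drt: "doubly_regular_tournament {1..n-1} (\<lambda>x y. A 1 x y = 1) t"
    using nonsym_class2_scheme_doubly_regular[OF assms(2)] by blast
  have "card {1..n-1} = 4 * t + 3"
    using doubly_regular_tournament.card_vertices[OF drt, of 1] assms(1) by simp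
  then have "n = 4 * t + 4"
    using assms(1) by simp
  then have "1 \<le> t" and half: "(real n - 2) / 2 = real (2 * t + 1)"
    using assms(1) by auto
  show ?thesis
  proof (intro allI impI)
    fix i j k
    assume "1 \<le> i \<and> i < j \<and> j < k \<and> k \<le> 2*n - 1"
    then have "if \<exists>a\<in>{1..n-1}. i = a \<and> j = n \<and> k = n + a then nu n A i j k = 2 * t + 1
        else nu n A i j k \<le> 2 * t"
      using nu_B1_bound[OF assms(2) drt \<open>1 \<le> t\<close>] by blast
    then show "real (nu n A i j k) \<le> (real n - 2) / 2 \<and>
        (real (nu n A i j k) = (real n - 2) / 2 \<longleftrightarrow> (\<exists>a\<in>{1..n-1}. i = a \<and> j = n \<and> k = n + a))"
      unfolding half by (auto split: if_splits)
  qed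
qed

end
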